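(* Let $G$ be a finite group. Then $G/[\epsilon_i,G]$ is a nested GVZ-group for every integer $i\ge 1$. Moreover, $G$ is a nested GVZ-group if and only if $\epsilon_\infty=1$.
   Context: All groups are finite. For $\chi\in\mathrm{Irr}(G)$, the center of $\chi$ is $Z(\chi)=\{g\in G : |\chi(g)|=\chi(1)\}$. A group is nested if for any two of its irreducible characters $\chi,\psi$ either $Z(\chi)\le Z(\psi)$ or $Z(\psi)\le Z(\chi)$. A group is a GVZ-group if every irreducible character vanishes on the complement of its center. For a normal subgroup $N$ of $G$, $\mathrm{Irr}(G\mid N)$ is the set of $\chi\in\mathrm{Irr}(G)$ with $N\not\le\ker(\chi)$, and $V(G\mid N)$ is the subgroup generated by all $g\in G$ such that $\chi(g)\neq0$ for some $\chi\in\mathrm{Irr}(G\mid N)$ (so $V(G\mid 1)=1$). Define $\epsilon_1=G$ and $\epsilon_{i+1}=V(G\mid[\epsilon_i,G])$ for $i\ge1$. This is a descending chain of normal subgroups which stabilizes; $\epsilon_\infty$ denotes its terminal term. *)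

theory Defs
  imports "HOL-Algebra.Algebra" "Jordan_Normal_Form.Matrix"
begin

definition is_rep :: "('g, 'b) monoid_scheme \<Rightarrow> nat \<Rightarrow> ('g \<Rightarrow> complex mat) \<Rightarrow> bool" where
  "is_rep G n \<rho> \<longleftrightarrow> n > 0 \<and> (\<forall>g \<in> carrier G. \<rho> g \<in> carrier_mat n n)
     \<and> \<rho> \<one>\<^bsub>G\<^esub> = 1\<^sub>m n
     \<and> (\<forall>x \<in> carrier G. \<forall>y \<in> carrier G. \<rho> (x \<otimes>\<^bsub>G\<^esub> y) = \<rho> x * \<rho> y)"

definition is_subspace :: "nat \<Rightarrow> complex vec set \<Rightarrow> bool" where
  "is_subspace n W \<longleftrightarrow> W \<subseteq> carrier_vec n \<and> 0\<^sub>v n \<in> W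
     \<and> (\<forall>v \<in> W. \<forall>w \<in> W. v + w \<in> W) \<and> (\<forall>c. \<forall>v \<in> W. c \<cdot>\<^sub>v v \<in> W)"

definition is_irrep :: "('g, 'b) monoid_scheme \<Rightarrow> nat \<Rightarrow> ('g \<Rightarrow> complex mat) \<Rightarrow> bool" where
  "is_irrep G n \<rho> \<longleftrightarrow> is_rep G n \<rho> \<and>
     (\<forall>W. is_subspace n W \<and> (\<forall>g \<in> carrier G. \<forall>w \<in> W. \<rho> g *\<^sub>v w \<in> W)
          \<longrightarrow> W = {0\<^sub>v n} \<or> W = carrier_vec n)"

definition mat_trace :: "complex mat \<Rightarrow> complex" where
  "mat_trace A = (\<Sum>i < dim_row A. A $$ (i, i))"

text \<open>Irr(G): characters of irreducible complex representations (set to 0 off the carrier).\<close>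
definition Irr :: "('g, 'b) monoid_scheme \<Rightarrow> ('g \<Rightarrow> complex) set" where
  "Irr G = {\<chi>. \<exists>n \<rho>. is_irrep G n \<rho> \<and>
              \<chi> = (\<lambda>g. if g \<in> carrier G then mat_trace (\<rho> g) else 0)}"

definition char_center :: "('g, 'b) monoid_scheme \<Rightarrow> ('g \<Rightarrow> complex) \<Rightarrow> 'g set" where
  "char_center G \<chi> = {g \<in> carrier G. cmod (\<chi> g) = cmod (\<chi> \<one>\<^bsub>G\<^esub>)}"

definition char_kernel :: "('g, 'b) monoid_scheme \<Rightarrow> ('g \<Rightarrow> complex) \<Rightarrow> 'g set" where
  "char_kernel G \<chi> = {g \<in> carrier G. \<chi> g = \<chi> \<one>\<^bsub>G\<^esub>}"

definition nested_group :: "('g, 'b) monoid_scheme \<Rightarrow> bool" where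
  "nested_group G \<longleftrightarrow> (\<forall>\<chi> \<in> Irr G. \<forall>\<psi> \<in> Irr G.
      char_center G \<chi> \<subseteq> char_center G \<psi> \<or> char_center G \<psi> \<subseteq> char_center G \<chi>)"

definition GVZ_group :: "('g, 'b) monoid_scheme \<Rightarrow> bool" where
  "GVZ_group G \<longleftrightarrow> (\<forall>\<chi> \<in> Irr G. \<forall>g \<in> carrier G - char_center G \<chi>. \<chi> g = 0)"

definition Irr_rel :: "('g, 'b) monoid_scheme \<Rightarrow> 'g set \<Rightarrow> ('g \<Rightarrow> complex) set" where
  "Irr_rel G N = {\<chi> \<in> Irr G. \<not> N \<subseteq> char_kernel G \<chi>}"

definition V_rel :: "('g, 'b) monoid_scheme \<Rightarrow> 'g set \<Rightarrow> 'g set" where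
  "V_rel G N = generate G {g \<in> carrier G. \<exists>\<chi> \<in> Irr_rel G N. \<chi> g \<noteq> 0}"

definition comm_sub :: "('g, 'b) monoid_scheme \<Rightarrow> 'g set \<Rightarrow> 'g set \<Rightarrow> 'g set" where
  "comm_sub G A B = generate G (\<Union>a \<in> A. \<Union>b \<in> B.
      {inv\<^bsub>G\<^esub> a \<otimes>\<^bsub>G\<^esub> inv\<^bsub>G\<^esub> b \<otimes>\<^bsub>G\<^esub> a \<otimes>\<^bsub>G\<^esub> b})"

text \<open>eps_aux G k = \<epsilon>_(k+1)\<close>
primrec eps_aux :: "('g, 'b) monoid_scheme \<Rightarrow> nat \<Rightarrow> 'g set" where
  "eps_aux G 0 = carrier G"
| "eps_aux G (Suc k) = V_rel G (comm_sub G (eps_aux G k) (carrier G))"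

definition eps :: "('g, 'b) monoid_scheme \<Rightarrow> nat \<Rightarrow> 'g set" where
  "eps G i = eps_aux G (i - 1)"

text \<open>Terminal term: first term equal to its successor (all later terms then coincide).\<close>
definition eps_inf :: "('g, 'b) monoid_scheme \<Rightarrow> 'g set" where
  "eps_inf G = eps_aux G (LEAST k. eps_aux G (Suc k) = eps_aux G k)"

end

theory Submission
  imports Defs "Jordan_Normal_Form.Jordan_Normal_Form_Existence"
begin

(* For an irreducible character \<chi> of a finite group G, the centre Z(\<chi>) consists of the elements
   represented by scalars, so by Schur's lemma [H, G] \<subseteq> ker \<chi> holds exactly when H \<subseteq> Z(\<chi>).
   Let i be least with [\<epsilon>\<^sub>i, G] \<subseteq> ker \<chi>. Then Z(\<chi>) = \<epsilon>\<^sub>i and \<chi> vanishes off its centre: for i = 1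
   this is the remark above, and for i > 1 the character lies in Irr(G | [\<epsilon>\<^sub>i\<^sub>-\<^sub>1, G]), so it vanishes
   outside \<epsilon>\<^sub>i \<subseteq> Z(\<chi>). This applies to every character of G/[\<epsilon>\<^sub>i, G], and to every character of G
   when \<epsilon>\<^sub>\<infinity> = 1; since the \<epsilon>\<^sub>j form a chain, these groups are nested GVZ-groups.

   Conversely, let G be a nested GVZ-group with \<epsilon>\<^sub>\<infinity> \<noteq> 1. Then Irr(G | [\<epsilon>\<^sub>\<infinity>, G]) is nonempty and
   contains a character \<chi>\<^sub>0 of maximal centre. Every character in this set is supported on its centre,
   which lies in Z(\<chi>\<^sub>0), so \<epsilon>\<^sub>\<infinity> = V(G | [\<epsilon>\<^sub>\<infinity>, G]) \<subseteq> Z(\<chi>\<^sub>0) and therefore [\<epsilon>\<^sub>\<infinity>, G] \<subseteq> ker \<chi>\<^sub>0,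
   a contradiction. *)

section \<open>Matrices of finite order\<close>

lemma mat_trace_mult_comm:
  fixes A B :: "complex mat"
  assumes "A \<in> carrier_mat n m" "B \<in> carrier_mat m n"
  shows "mat_trace (A * B) = mat_trace (B * A)"
proof -
  have "mat_trace (A * B) = (\<Sum>i<n. \<Sum>k<m. A $$ (i,k) * B $$ (k,i))"
    using assms by (auto simp: mat_trace_def scalar_prod_def intro!: sum.cong)
  also have "\<dots> = (\<Sum>k<m. \<Sum>i<n. B $$ (k,i) * A $$ (i,k))"
    by (subst sum.swap) (simp add: mult.commute)
  also have "\<dots> = mat_trace (B * A)"
    using assms by (auto simp: mat_trace_def scalar_prod_def intro!: sum.cong)
  finally show ?thesis .
qed

lemma mat_trace_smult_one_mat: "mat_trace (c \<cdot>\<^sub>m 1\<^sub>m n) = c * of_nat n"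
  by (simp add: mat_trace_def)

lemma smult_one_mat_pow: "(c \<cdot>\<^sub>m 1\<^sub>m n) ^\<^sub>m k = (c ^ k :: 'a :: comm_ring_1) \<cdot>\<^sub>m 1\<^sub>m n"
proof (induction k)
  case 0
  show ?case by (rule eq_matI) auto
next
  case (Suc k)
  then show ?case by (auto intro!: eq_matI)
qed

lemma jordan_block_pow_eq_one_mat:
  fixes a :: "'a :: field_char_0"
  assumes "jordan_block k a ^\<^sub>m m = 1\<^sub>m k" "k > 0" "m > 0"
  shows "k = 1" "a ^ m = 1"
proof -
  have e: "(jordan_block k a ^\<^sub>m m) $$ (i,j) = 1\<^sub>m k $$ (i,j)" for i j
    using assms(1) by simp
  show "a ^ m = 1" using e[of 0 0] assms(2) by (simp add: jordan_block_pow)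
  show "k = 1"
  proof (rule ccontr)
    assume "k \<noteq> 1"
    then have "of_nat m * a ^ (m - 1) = 0" using e[of 0 1] assms(2) by (simp add: jordan_block_pow)
    then have "a = 0" using assms(3) by simp
    with e[of 0 0] assms(2,3) show False by (simp add: jordan_block_pow power_0_left)
  qed
qed

lemma four_block_mat_eq_one_mat:
  assumes "A \<in> carrier_mat k k" "D \<in> carrier_mat q q"
    "four_block_mat A (0\<^sub>m k q) (0\<^sub>m q k) D = 1\<^sub>m (k + q)"
  shows "A = 1\<^sub>m k" "D = 1\<^sub>m q"
proof -
  have e: "four_block_mat A (0\<^sub>m k q) (0\<^sub>m q k) D $$ (i,j) = 1\<^sub>m (k + q) $$ (i,j)" for i j
    using assms(3) by simp
  show "A = 1\<^sub>m k"
  proof (rule eq_matI)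
    fix i j assume "i < dim_row (1\<^sub>m k)" "j < dim_col (1\<^sub>m k)"
    then show "A $$ (i,j) = 1\<^sub>m k $$ (i,j)" using e[of i j] assms(1,2) by auto
  qed (use assms in auto)
  show "D = 1\<^sub>m q"
  proof (rule eq_matI)
    fix i j assume "i < dim_row (1\<^sub>m q)" "j < dim_col (1\<^sub>m q)"
    then show "D $$ (i,j) = 1\<^sub>m q $$ (i,j)" using e[of "i + k" "j + k"] assms(1,2) by auto
  qed (use assms in auto)
qed

lemma jordan_matrix_pow_eq_one_mat:
  fixes n_as :: "(nat \<times> 'a :: field_char_0) list"
  assumes "0 \<notin> fst ` set n_as" "m > 0"
    "jordan_matrix n_as ^\<^sub>m m = 1\<^sub>m (sum_list (map fst n_as))"
  shows "\<exists>f. jordan_matrix n_as = mat_diag (sum_list (map fst n_as)) f \<and> (\<forall>i. f i ^ m = 1)"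
  using assms
proof (induction n_as)
  case Nil
  show ?case by (rule exI[of _ "\<lambda>_. 1"]) (auto simp: jordan_matrix_def mat_diag_def)
next
  case (Cons ka n_as)
  obtain k a where ka: "ka = (k, a)" by force
  let ?N = "sum_list (map fst n_as)"
  have k: "k > 0" using Cons.prems(1) ka by auto
  have J: "jordan_matrix (ka # n_as) =
      four_block_mat (jordan_block k a) (0\<^sub>m k ?N) (0\<^sub>m ?N k) (jordan_matrix n_as)"
    unfolding ka jordan_matrix_Cons ..
  have "four_block_mat (jordan_block k a ^\<^sub>m m) (0\<^sub>m k ?N) (0\<^sub>m ?N k) (jordan_matrix n_as ^\<^sub>m m)
      = diag_block_mat (map (\<lambda>(n,a). jordan_block n a ^\<^sub>m m) (ka # n_as))"
    by (simp add: ka Let_def jordan_matrix_pow[symmetric])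
  also have "\<dots> = jordan_matrix (ka # n_as) ^\<^sub>m m"
    by (rule jordan_matrix_pow[symmetric])
  also have "\<dots> = 1\<^sub>m (k + ?N)" using Cons.prems(3) ka by simp
  finally have "four_block_mat (jordan_block k a ^\<^sub>m m) (0\<^sub>m k ?N) (0\<^sub>m ?N k) (jordan_matrix n_as ^\<^sub>m m)
      = 1\<^sub>m (k + ?N)" .
  from four_block_mat_eq_one_mat[OF _ _ this]
  have blocks: "jordan_block k a ^\<^sub>m m = 1\<^sub>m k" "jordan_matrix n_as ^\<^sub>m m = 1\<^sub>m ?N"
    by auto
  obtain f where f: "jordan_matrix n_as = mat_diag ?N f" "\<forall>i. f i ^ m = 1"
    using Cons.IH Cons.prems(1,2) blocks(2) by auto
  let ?g = "\<lambda>i. if i = 0 then a else f (i - 1)"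
  have "jordan_matrix (ka # n_as) = mat_diag (sum_list (map fst (ka # n_as))) ?g"
    unfolding J f(1) using jordan_block_pow_eq_one_mat[OF blocks(1) k Cons.prems(2)] ka
    by (intro eq_matI) (auto simp: mat_diag_def jordan_block_def)
  moreover have "\<forall>i. ?g i ^ m = 1"
    using jordan_block_pow_eq_one_mat[OF blocks(1) k Cons.prems(2)] f(2) by auto
  ultimately show ?case by blast
qed

(* With u the mean of the z\<^sub>i, each Re (u\<^sup>* z\<^sub>i) is at most 1 and they sum to n. *)

lemma unit_sum_norm_eq_card_imp_eq:
  fixes z :: "nat \<Rightarrow> complex"
  assumes "\<And>i. i < n \<Longrightarrow> cmod (z i) = 1" "cmod (\<Sum>i<n. z i) = real n" "i < n" "j < n"
  shows "z i = z j"
proof -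
  let ?S = "\<Sum>i<n. z i"
  have n: "n > 0" using assms(3) by auto
  define u where "u = ?S / of_nat n"
  have u: "cmod u = 1" using assms(2) n by (simp add: u_def norm_divide)
  then have cnj_u: "cnj u * u = 1"
    by (metis complex_norm_square mult.commute of_real_1 power_one)
  have "(\<Sum>k<n. Re (cnj u * z k)) = Re (cnj u * ?S)"
    by (simp add: sum_distrib_left Re_sum)
  also have "cnj u * ?S = of_nat n * (cnj u * u)" using n by (simp add: u_def)
  finally have "(\<Sum>k<n. 1 - Re (cnj u * z k)) = 0" using cnj_u by (simp add: sum_subtractf)
  moreover have Re_le: "Re (cnj u * z k) \<le> 1" if "k < n" for k
    using complex_Re_le_cmod[of "cnj u * z k"] u assms(1)[OF that] by (simp add: norm_mult)
  ultimately have Re_eq: "Re (cnj u * z k) = 1" if "k < n" for k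
    using that by (subst (asm) sum_nonneg_eq_0_iff) auto
  have "z k = u" if "k < n" for k
  proof -
    let ?w = "cnj u * z k"
    have "cmod ?w = 1" using u assms(1)[OF that] by (simp add: norm_mult)
    then have "(Re ?w)\<^sup>2 + (Im ?w)\<^sup>2 = 1" by (metis cmod_power2 one_power2)
    then have "?w = 1" using Re_eq[OF that] by (simp add: complex_eq_iff)
    have "z k = (cnj u * u) * z k" using cnj_u by simp
    also have "\<dots> = u * ?w" by (simp add: mult.commute mult.left_commute)
    finally show ?thesis using \<open>?w = 1\<close> by simp
  qed
  then show ?thesis using assms(3,4) by simp
qed

(* The eigenvalues of a matrix of finite order are roots of unity and it is diagonalisable, so
   its trace has norm n only when all eigenvalues coincide. *)

lemma finite_order_trace_norm_imp_scalar:
  fixes A :: "complex mat"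
  assumes A: "A \<in> carrier_mat n n" and m: "m > 0" and Am: "A ^\<^sub>m m = 1\<^sub>m n"
    and tr: "cmod (mat_trace A) = real n"
  shows "\<exists>c. A = c \<cdot>\<^sub>m 1\<^sub>m n \<and> c ^ m = 1"
proof -
  obtain as where "char_poly A = (\<Prod>a\<leftarrow>as. [:- a, 1:])"
    using char_poly_factorized[OF A] by auto
  from jordan_nf_exists[OF A this] obtain n_as where jnf: "jordan_nf A n_as" by auto
  let ?J = "jordan_matrix n_as"
  from jnf obtain P Q where w: "similar_mat_wit A ?J P Q" and z: "0 \<notin> fst ` set n_as"
    unfolding jordan_nf_def similar_mat_def by auto
  from w A have J: "?J \<in> carrier_mat n n" and P: "P \<in> carrier_mat n n" and Q: "Q \<in> carrier_mat n n"
    and PQ: "P * Q = 1\<^sub>m n" and QP: "Q * P = 1\<^sub>m n" and AJ: "A = P * ?J * Q"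
    unfolding similar_mat_wit_def Let_def by auto
  have dim: "sum_list (map fst n_as) = n" using J by auto
  have "?J ^\<^sub>m m = Q * A ^\<^sub>m m * P"
    by (rule similar_mat_wit_pow_id[OF similar_mat_wit_sym[OF w]])
  also have "\<dots> = 1\<^sub>m n" using Am Q P QP by simp
  finally obtain f where f: "?J = mat_diag n f" "\<And>i. f i ^ m = 1"
    using jordan_matrix_pow_eq_one_mat[OF z m] dim by auto
  have f_unit: "cmod (f i) = 1" for i
    using f(2)[of i] m by (metis norm_ge_zero norm_one norm_power power_eq_imp_eq_base power_one zero_le_one)
  have "mat_trace A = mat_trace (Q * (P * ?J))"
    unfolding AJ by (rule mat_trace_mult_comm[of _ n n]) (use P J Q in auto)
  also have "Q * (P * ?J) = ?J" using P J Q QP by (simp add: left_mult_one_mat[OF J] flip: assoc_mult_mat)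
  finally have "cmod (\<Sum>i<n. f i) = real n" using tr f(1) by (simp add: mat_trace_def mat_diag_def)
  then have "?J = f 0 \<cdot>\<^sub>m 1\<^sub>m n"
    unfolding f(1) by (intro eq_matI) (auto simp: mat_diag_def intro: unit_sum_norm_eq_card_imp_eq f_unit)
  then have "A = P * (f 0 \<cdot>\<^sub>m 1\<^sub>m n) * Q" using AJ by simp
  also have "P * (f 0 \<cdot>\<^sub>m 1\<^sub>m n) = f 0 \<cdot>\<^sub>m P"
    using mult_smult_distrib[OF P one_carrier_mat] P by simp
  also have "(f 0 \<cdot>\<^sub>m P) * Q = f 0 \<cdot>\<^sub>m (P * Q)" by (rule mult_smult_assoc_mat[OF P Q])
  finally show ?thesis using PQ f(2) by auto
qed

lemma complex_mat_has_eigenvector: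
  fixes A :: "complex mat"
  assumes A: "A \<in> carrier_mat n n" and n: "n > 0"
  shows "\<exists>v c. v \<in> carrier_vec n \<and> v \<noteq> 0\<^sub>v n \<and> A *\<^sub>v v = c \<cdot>\<^sub>v v"
proof -
  obtain as where cp: "char_poly A = (\<Prod>a\<leftarrow>as. [:- a, 1:])" and l: "length as = n"
    using char_poly_factorized[OF A] by auto
  then obtain a where a: "a \<in> set as" using n by (cases as) auto
  have "poly (char_poly A) a = 0" unfolding cp using a
    by (induction as) (auto simp: poly_prod_list)
  then have "eigenvalue A a" using eigenvalue_root_char_poly[OF A] by simp
  then show ?thesis using A unfolding eigenvalue_def eigenvector_def by auto
qed

lemma mat_eq_smult_one_matI:
  fixes A :: "'a :: comm_ring_1 mat"
  assumes A: "A \<in> carrier_mat n n" and "\<And>v. v \<in> carrier_vec n \<Longrightarrow> A *\<^sub>v v = c \<cdot>\<^sub>v v"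
  shows "A = c \<cdot>\<^sub>m 1\<^sub>m n"
proof (rule eq_matI)
  fix i j assume "i < dim_row (c \<cdot>\<^sub>m 1\<^sub>m n)" "j < dim_col (c \<cdot>\<^sub>m 1\<^sub>m n)"
  then have i: "i < n" and j: "j < n" by auto
  have "A $$ (i,j) = (A *\<^sub>v unit_vec n j) $ i" using A i j by simp
  also have "\<dots> = (c \<cdot>\<^sub>m 1\<^sub>m n) $$ (i,j)" using assms(2)[of "unit_vec n j"] i j by simp
  finally show "A $$ (i,j) = (c \<cdot>\<^sub>m 1\<^sub>m n) $$ (i,j)" .
qed (use A in auto)

lemma eigenspace_is_subspace:
  fixes A :: "complex mat"
  assumes A: "A \<in> carrier_mat n n"
  shows "is_subspace n {w \<in> carrier_vec n. A *\<^sub>v w = c \<cdot>\<^sub>v w}"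
  unfolding is_subspace_def
proof (intro conjI ballI allI)
  fix x y assume x: "x \<in> {w \<in> carrier_vec n. A *\<^sub>v w = c \<cdot>\<^sub>v w}"
    and y: "y \<in> {w \<in> carrier_vec n. A *\<^sub>v w = c \<cdot>\<^sub>v w}"
  then have "A *\<^sub>v (x + y) = c \<cdot>\<^sub>v (x + y)"
    using A by (simp add: mult_add_distrib_mat_vec smult_add_distrib_vec[of x n y])
  then show "x + y \<in> {w \<in> carrier_vec n. A *\<^sub>v w = c \<cdot>\<^sub>v w}" using x y by auto
next
  fix k x assume x: "x \<in> {w \<in> carrier_vec n. A *\<^sub>v w = c \<cdot>\<^sub>v w}"
  then have "A *\<^sub>v (k \<cdot>\<^sub>v x) = c \<cdot>\<^sub>v (k \<cdot>\<^sub>v x)"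
    using A by (simp add: mult_mat_vec smult_smult_assoc mult.commute)
  then show "k \<cdot>\<^sub>v x \<in> {w \<in> carrier_vec n. A *\<^sub>v w = c \<cdot>\<^sub>v w}" using x by auto
qed (use A in auto)

(* An eigenspace of A is invariant under the representation, hence the whole space. *)

lemma schur_lemma:
  fixes A :: "complex mat"
  assumes irr: "is_irrep G n \<rho>" and A: "A \<in> carrier_mat n n"
    and comm: "\<And>h. h \<in> carrier G \<Longrightarrow> A * \<rho> h = \<rho> h * A"
  shows "\<exists>c. A = c \<cdot>\<^sub>m 1\<^sub>m n"
proof -
  have n: "n > 0" and \<rho>: "\<And>h. h \<in> carrier G \<Longrightarrow> \<rho> h \<in> carrier_mat n n"
    using irr unfolding is_irrep_def is_rep_def by auto
  obtain v c where v: "v \<in> carrier_vec n" "v \<noteq> 0\<^sub>v n" "A *\<^sub>v v = c \<cdot>\<^sub>v v"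
    using complex_mat_has_eigenvector[OF A n] by auto
  define W where "W = {w \<in> carrier_vec n. A *\<^sub>v w = c \<cdot>\<^sub>v w}"
  have "\<rho> g *\<^sub>v w \<in> W" if g: "g \<in> carrier G" and w: "w \<in> W" for g w
  proof -
    have "A *\<^sub>v (\<rho> g *\<^sub>v w) = (\<rho> g * A) *\<^sub>v w"
      using A \<rho>[OF g] w comm[OF g] by (simp add: W_def flip: assoc_mult_mat_vec)
    also have "\<dots> = c \<cdot>\<^sub>v (\<rho> g *\<^sub>v w)" using A \<rho>[OF g] w by (simp add: W_def mult_mat_vec)
    finally show ?thesis using \<rho>[OF g] w by (simp add: W_def)
  qed
  then have "W = {0\<^sub>v n} \<or> W = carrier_vec n"
    using irr eigenspace_is_subspace[OF A] unfolding is_irrep_def W_def by blast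
  moreover have "v \<in> W" using v by (simp add: W_def)
  ultimately have "W = carrier_vec n" using v(2) by auto
  then have "A = c \<cdot>\<^sub>m 1\<^sub>m n" by (intro mat_eq_smult_one_matI[OF A]) (auto simp: W_def)
  then show ?thesis by blast
qed

section \<open>Representations and their characters\<close>

definition character :: "('g, 'b) monoid_scheme \<Rightarrow> ('g \<Rightarrow> complex mat) \<Rightarrow> 'g \<Rightarrow> complex" where
  "character G \<rho> = (\<lambda>g. if g \<in> carrier G then mat_trace (\<rho> g) else 0)"

lemma IrrI: "is_irrep G n \<rho> \<Longrightarrow> character G \<rho> \<in> Irr G"
  unfolding Irr_def character_def by auto

lemma IrrE:
  assumes "\<chi> \<in> Irr G"
  obtains n \<rho> where "is_irrep G n \<rho>" "\<chi> = character G \<rho>"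
  using assms unfolding Irr_def character_def by auto

lemma irrep_is_rep: "is_irrep G n \<rho> \<Longrightarrow> is_rep G n \<rho>"
  unfolding is_irrep_def by simp

context group
begin

lemma rep_dim_pos: "is_rep G n \<rho> \<Longrightarrow> n > 0"
  unfolding is_rep_def by simp

lemma rep_carrier: "is_rep G n \<rho> \<Longrightarrow> g \<in> carrier G \<Longrightarrow> \<rho> g \<in> carrier_mat n n"
  unfolding is_rep_def by simp

lemma rep_one: "is_rep G n \<rho> \<Longrightarrow> \<rho> \<one> = 1\<^sub>m n"
  unfolding is_rep_def by simp

lemma rep_mult:
  "is_rep G n \<rho> \<Longrightarrow> x \<in> carrier G \<Longrightarrow> y \<in> carrier G \<Longrightarrow> \<rho> (x \<otimes> y) = \<rho> x * \<rho> y"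
  unfolding is_rep_def by simp

lemma rep_inv_mult: "is_rep G n \<rho> \<Longrightarrow> g \<in> carrier G \<Longrightarrow> \<rho> (inv g) * \<rho> g = 1\<^sub>m n"
  using rep_mult[of n \<rho> "inv g" g] rep_one[of n \<rho>] by simp

lemma rep_pow:
  assumes "is_rep G n \<rho>" "g \<in> carrier G"
  shows "\<rho> (g [^] (k::nat)) = \<rho> g ^\<^sub>m k"
proof (induction k)
  case 0
  show ?case using rep_one[OF assms(1)] rep_carrier[OF assms] by simp
next
  case (Suc k)
  then show ?case using assms by (simp add: rep_mult)
qed

lemma rep_pow_order: "is_rep G n \<rho> \<Longrightarrow> g \<in> carrier G \<Longrightarrow> \<rho> g ^\<^sub>m Coset.order G = 1\<^sub>m n"
  using rep_pow[of n \<rho> g "Coset.order G"] pow_order_eq_1[of g] rep_one[of n \<rho>] by simp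

lemma character_one: "is_rep G n \<rho> \<Longrightarrow> character G \<rho> \<one> = of_nat n"
  unfolding character_def using rep_one[of n \<rho>] by (simp add: mat_trace_def)

lemma mult_eq_mult_commutator:
  assumes "a \<in> carrier G" "b \<in> carrier G"
  shows "a \<otimes> b = (b \<otimes> a) \<otimes> (inv a \<otimes> inv b \<otimes> a \<otimes> b)"
proof -
  have "(b \<otimes> a) \<otimes> (inv a \<otimes> inv b \<otimes> a \<otimes> b) = ((((b \<otimes> a) \<otimes> inv a) \<otimes> inv b) \<otimes> a) \<otimes> b"
    using assms by (simp only: m_assoc inv_closed m_closed)
  also have "\<dots> = a \<otimes> b" using assms by (simp add: m_assoc)
  finally show ?thesis by simp
qed

lemma rep_commute_if_commutator_trivial:
  assumes \<rho>: "is_rep G n \<rho>" and ab: "a \<in> carrier G" "b \<in> carrier G"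
    and "\<rho> (inv a \<otimes> inv b \<otimes> a \<otimes> b) = 1\<^sub>m n"
  shows "\<rho> a * \<rho> b = \<rho> b * \<rho> a"
proof -
  have "\<rho> a * \<rho> b = \<rho> (b \<otimes> a) * \<rho> (inv a \<otimes> inv b \<otimes> a \<otimes> b)"
    using ab mult_eq_mult_commutator[OF ab] by (simp flip: rep_mult[OF \<rho>])
  also have "\<dots> = \<rho> (b \<otimes> a)" using assms rep_carrier[OF \<rho>, of "b \<otimes> a"] by simp
  finally show ?thesis using ab by (simp add: rep_mult[OF \<rho>])
qed

lemma rep_commutator_trivial_if_scalar:
  assumes \<rho>: "is_rep G n \<rho>" and ab: "a \<in> carrier G" "b \<in> carrier G"
    and a_scalar: "\<rho> a = c \<cdot>\<^sub>m 1\<^sub>m n"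
  shows "\<rho> (inv a \<otimes> inv b \<otimes> a \<otimes> b) = 1\<^sub>m n"
proof -
  let ?x = "b \<otimes> a" and ?y = "inv a \<otimes> inv b \<otimes> a \<otimes> b"
  have x: "?x \<in> carrier G" and y: "?y \<in> carrier G" using ab by auto
  have b: "\<rho> b \<in> carrier_mat n n" using rep_carrier[OF \<rho> ab(2)] .
  have "\<rho> ?x * \<rho> ?y = \<rho> a * \<rho> b"
    using ab x y mult_eq_mult_commutator[OF ab] by (simp flip: rep_mult[OF \<rho>])
  also have "\<dots> = c \<cdot>\<^sub>m \<rho> b"
    using mult_smult_assoc_mat[OF one_carrier_mat b, of c] b unfolding a_scalar by simp
  also have "\<dots> = \<rho> b * \<rho> a"
    using mult_smult_distrib[OF b one_carrier_mat, of c] b unfolding a_scalar by simp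
  also have "\<dots> = \<rho> ?x" using ab by (simp add: rep_mult[OF \<rho>])
  finally have xy: "\<rho> ?x * \<rho> ?y = \<rho> ?x" .
  have "\<rho> ?y = (\<rho> (inv ?x) * \<rho> ?x) * \<rho> ?y"
    using rep_inv_mult[OF \<rho> x] rep_carrier[OF \<rho> y] by simp
  also have "\<dots> = \<rho> (inv ?x) * (\<rho> ?x * \<rho> ?y)"
    using rep_carrier[OF \<rho>] x y by (simp add: assoc_mult_mat[of _ n n _ n _ n])
  also have "\<dots> = 1\<^sub>m n" using xy rep_inv_mult[OF \<rho> x] by simp
  finally show ?thesis .
qed

lemma rep_kernel_subgroup:
  assumes \<rho>: "is_rep G n \<rho>"
  shows "subgroup {g \<in> carrier G. \<rho> g = 1\<^sub>m n} G"
proof (rule subgroupI)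
  fix a assume a: "a \<in> {g \<in> carrier G. \<rho> g = 1\<^sub>m n}"
  then have "\<rho> (inv a) = \<rho> (inv a) * \<rho> a" using rep_carrier[OF \<rho>, of "inv a"] by simp
  then show "inv a \<in> {g \<in> carrier G. \<rho> g = 1\<^sub>m n}" using rep_inv_mult[OF \<rho>, of a] a by simp
qed (use rep_one[OF \<rho>] rep_mult[OF \<rho>] in auto)

lemma rep_scalar_subgroup:
  assumes \<rho>: "is_rep G n \<rho>"
  shows "subgroup {g \<in> carrier G. \<exists>c. \<rho> g = c \<cdot>\<^sub>m 1\<^sub>m n} G"
proof (rule subgroupI)
  show "{g \<in> carrier G. \<exists>c. \<rho> g = c \<cdot>\<^sub>m 1\<^sub>m n} \<noteq> {}"
    using rep_one[OF \<rho>] by (auto intro!: exI[of _ 1] eq_matI)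
next
  fix a assume "a \<in> {g \<in> carrier G. \<exists>c. \<rho> g = c \<cdot>\<^sub>m 1\<^sub>m n}"
  then obtain c where a: "a \<in> carrier G" and c: "\<rho> a = c \<cdot>\<^sub>m 1\<^sub>m n" by auto
  have inv_a: "\<rho> (inv a) \<in> carrier_mat n n" using rep_carrier[OF \<rho>] a by simp
  have ca: "c \<cdot>\<^sub>m \<rho> (inv a) = 1\<^sub>m n"
    using rep_inv_mult[OF \<rho> a] mult_smult_distrib[OF inv_a one_carrier_mat, of c] inv_a
    unfolding c by simp
  have "c \<noteq> 0"
  proof
    assume "c = 0"
    then have "(c \<cdot>\<^sub>m \<rho> (inv a)) $$ (0, 0) = 0" using inv_a rep_dim_pos[OF \<rho>] by simp
    with ca rep_dim_pos[OF \<rho>] show False by simp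
  qed
  have "\<rho> (inv a) = inverse c \<cdot>\<^sub>m (c \<cdot>\<^sub>m \<rho> (inv a))"
    using inv_a \<open>c \<noteq> 0\<close> by (intro eq_matI) auto
  also have "\<dots> = inverse c \<cdot>\<^sub>m 1\<^sub>m n" unfolding ca ..
  finally show "inv a \<in> {g \<in> carrier G. \<exists>c. \<rho> g = c \<cdot>\<^sub>m 1\<^sub>m n}" using a by auto
next
  fix a b
  assume "a \<in> {g \<in> carrier G. \<exists>c. \<rho> g = c \<cdot>\<^sub>m 1\<^sub>m n}" "b \<in> {g \<in> carrier G. \<exists>c. \<rho> g = c \<cdot>\<^sub>m 1\<^sub>m n}"
  then obtain c d where ab: "a \<in> carrier G" "b \<in> carrier G"
    and "\<rho> a = c \<cdot>\<^sub>m 1\<^sub>m n" "\<rho> b = d \<cdot>\<^sub>m 1\<^sub>m n" by auto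
  then have "\<rho> (a \<otimes> b) = (c * d) \<cdot>\<^sub>m 1\<^sub>m n" using rep_mult[OF \<rho> ab] by (intro eq_matI) auto
  then show "a \<otimes> b \<in> {g \<in> carrier G. \<exists>c. \<rho> g = c \<cdot>\<^sub>m 1\<^sub>m n}" using ab by auto
qed auto

end

locale finite_group = group +
  assumes finite_carrier: "finite (carrier G)"
begin

lemma rep_scalar_root_of_unity:
  assumes \<rho>: "is_rep G n \<rho>" and g: "g \<in> carrier G" and c: "\<rho> g = c \<cdot>\<^sub>m 1\<^sub>m n"
  shows "c ^ Coset.order G = 1"
proof -
  have "(c ^ Coset.order G) \<cdot>\<^sub>m 1\<^sub>m n = 1\<^sub>m n"
    using rep_pow_order[OF \<rho> g] unfolding c smult_one_mat_pow .
  then have "((c ^ Coset.order G) \<cdot>\<^sub>m 1\<^sub>m n) $$ (0, 0) = 1\<^sub>m n $$ (0, 0)" by simp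
  then show ?thesis using rep_dim_pos[OF \<rho>] by simp
qed

lemma char_center_character:
  assumes \<rho>: "is_rep G n \<rho>"
  shows "char_center G (character G \<rho>) = {g \<in> carrier G. \<exists>c. \<rho> g = c \<cdot>\<^sub>m 1\<^sub>m n}"
proof (intro equalityI subsetI)
  have order_pos: "Coset.order G > 0" using finite_carrier order_gt_0_iff_finite by blast
  fix g
  assume "g \<in> char_center G (character G \<rho>)"
  then have g: "g \<in> carrier G" and "cmod (mat_trace (\<rho> g)) = real n"
    using character_one[OF \<rho>] by (auto simp: char_center_def character_def)
  then show "g \<in> {g \<in> carrier G. \<exists>c. \<rho> g = c \<cdot>\<^sub>m 1\<^sub>m n}"
    using finite_order_trace_norm_imp_scalar[OF rep_carrier[OF \<rho> g] order_pos rep_pow_order[OF \<rho> g]]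
    by auto
next
  have order_pos: "Coset.order G > 0" using finite_carrier order_gt_0_iff_finite by blast
  fix g
  assume "g \<in> {g \<in> carrier G. \<exists>c. \<rho> g = c \<cdot>\<^sub>m 1\<^sub>m n}"
  then obtain c where g: "g \<in> carrier G" and c: "\<rho> g = c \<cdot>\<^sub>m 1\<^sub>m n" by auto
  have "cmod c ^ Coset.order G = 1"
    using rep_scalar_root_of_unity[OF \<rho> g c] by (metis norm_power norm_one)
  then have "cmod c = 1"
    using order_pos by (metis norm_ge_zero power_eq_imp_eq_base power_one zero_le_one)
  then show "g \<in> char_center G (character G \<rho>)"
    using g c character_one[OF \<rho>]
    by (simp add: char_center_def character_def mat_trace_smult_one_mat norm_mult)
qed

lemma char_kernel_character:
  assumes \<rho>: "is_rep G n \<rho>"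
  shows "char_kernel G (character G \<rho>) = {g \<in> carrier G. \<rho> g = 1\<^sub>m n}"
proof (intro equalityI subsetI)
  fix g
  assume ker: "g \<in> char_kernel G (character G \<rho>)"
  then have g: "g \<in> carrier G" and tr: "mat_trace (\<rho> g) = of_nat n"
    using character_one[OF \<rho>] by (auto simp: char_kernel_def character_def)
  then have "g \<in> char_center G (character G \<rho>)"
    using character_one[OF \<rho>] by (simp add: char_center_def character_def)
  then obtain c where c: "\<rho> g = c \<cdot>\<^sub>m 1\<^sub>m n" using char_center_character[OF \<rho>] by auto
  then have "c = 1" using tr rep_dim_pos[OF \<rho>] by (simp add: mat_trace_smult_one_mat)
  then show "g \<in> {g \<in> carrier G. \<rho> g = 1\<^sub>m n}" using c g by (auto intro: eq_matI)
qed (use character_one[OF \<rho>] in \<open>auto simp: char_kernel_def character_def mat_trace_def\<close>)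

lemma char_center_subgroup:
  assumes "\<chi> \<in> Irr G"
  shows "subgroup (char_center G \<chi>) G"
proof -
  obtain n \<rho> where \<rho>: "is_rep G n \<rho>" and \<chi>: "\<chi> = character G \<rho>"
    using assms irrep_is_rep by (metis IrrE)
  show ?thesis unfolding \<chi> char_center_character[OF \<rho>] by (rule rep_scalar_subgroup[OF \<rho>])
qed

lemma Irr_nonzero_on_center:
  assumes "\<chi> \<in> Irr G" and g: "g \<in> char_center G \<chi>"
  shows "\<chi> g \<noteq> 0"
proof -
  obtain n \<rho> where \<rho>: "is_rep G n \<rho>" and \<chi>: "\<chi> = character G \<rho>"
    using assms(1) irrep_is_rep by (metis IrrE)
  have "cmod (\<chi> g) = real n" using g character_one[OF \<rho>] by (simp add: char_center_def \<chi>)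
  then show ?thesis using rep_dim_pos[OF \<rho>] by auto
qed

end

section \<open>Commutator subgroups\<close>

context group
begin

lemma m_inv_cancel_left: "x \<in> carrier G \<Longrightarrow> z \<in> carrier G \<Longrightarrow> x \<otimes> (inv x \<otimes> z) = z"
  by (simp flip: m_assoc)

lemma inv_m_cancel_left: "x \<in> carrier G \<Longrightarrow> z \<in> carrier G \<Longrightarrow> inv x \<otimes> (x \<otimes> z) = z"
  by (simp flip: m_assoc)

lemma normal_generate_if_conj_in_generate:
  assumes A: "A \<subseteq> carrier G"
    and conj: "\<And>a g. a \<in> A \<Longrightarrow> g \<in> carrier G \<Longrightarrow> g \<otimes> a \<otimes> inv g \<in> generate G A"
  shows "generate G A \<lhd> G"
proof (rule normal_invI[OF generate_is_subgroup[OF A]])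
  interpret K: subgroup "generate G A" G by (rule generate_is_subgroup[OF A])
  fix g h assume g: "g \<in> carrier G" and h: "h \<in> generate G A"
  from h show "g \<otimes> h \<otimes> inv g \<in> generate G A"
  proof (induction rule: generate.induct)
    case one
    show ?case using g by simp
  next
    case (incl a)
    show ?case by (rule conj[OF incl g])
  next
    case (inv a)
    have "g \<otimes> inv a \<otimes> inv g = inv (g \<otimes> a \<otimes> inv g)"
      using g inv A by (auto simp: inv_mult_group m_assoc)
    then show ?case using K.m_inv_closed[OF conj[OF inv g]] by simp
  next
    case (eng h1 h2)
    have "h1 \<in> carrier G" "h2 \<in> carrier G" using eng.hyps A generate_incl by auto
    then have "g \<otimes> (h1 \<otimes> h2) \<otimes> inv g = (g \<otimes> h1 \<otimes> inv g) \<otimes> (g \<otimes> h2 \<otimes> inv g)"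
      using g by (simp add: m_assoc inv_m_cancel_left)
    then show ?case using K.m_closed[OF eng.IH] by simp
  qed
qed

lemma comm_sub_incl:
  "a \<in> H \<Longrightarrow> b \<in> carrier G \<Longrightarrow> inv a \<otimes> inv b \<otimes> a \<otimes> b \<in> comm_sub G H (carrier G)"
  unfolding comm_sub_def by (rule generate.incl) blast

lemma comm_sub_subset_subgroupI:
  assumes "subgroup K G" and "\<And>a b. a \<in> H \<Longrightarrow> b \<in> carrier G \<Longrightarrow> inv a \<otimes> inv b \<otimes> a \<otimes> b \<in> K"
  shows "comm_sub G H (carrier G) \<subseteq> K"
  unfolding comm_sub_def by (rule generate_subgroup_incl) (use assms in auto)

lemma comm_sub_mono: "H \<subseteq> H' \<Longrightarrow> comm_sub G H C \<subseteq> comm_sub G H' C"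
  unfolding comm_sub_def by (rule mono_generate) blast

lemma comm_sub_one: "comm_sub G {\<one>} (carrier G) = {\<one>}"
proof -
  have "(\<Union>a \<in> {\<one>}. \<Union>b \<in> carrier G. {inv a \<otimes> inv b \<otimes> a \<otimes> b}) = {\<one>}" by auto
  then show ?thesis unfolding comm_sub_def by (simp add: generate_one)
qed

(* Normality follows from x [a, b] x\<^sup>-\<^sup>1 = [a, x\<^sup>-\<^sup>1]\<^sup>-\<^sup>1 [a, b x\<^sup>-\<^sup>1],
   where [a, b] = a\<^sup>-\<^sup>1 b\<^sup>-\<^sup>1 a b. *)

lemma comm_sub_normal:
  assumes H: "H \<subseteq> carrier G"
  shows "comm_sub G H (carrier G) \<lhd> G"
  unfolding comm_sub_def
proof (rule normal_generate_if_conj_in_generate)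
  show "(\<Union>a \<in> H. \<Union>b \<in> carrier G. {inv a \<otimes> inv b \<otimes> a \<otimes> b}) \<subseteq> carrier G" using H by auto
next
  interpret K: subgroup "comm_sub G H (carrier G)" G
    unfolding comm_sub_def by (rule generate_is_subgroup) (use H in auto)
  fix c x
  assume "c \<in> (\<Union>a \<in> H. \<Union>b \<in> carrier G. {inv a \<otimes> inv b \<otimes> a \<otimes> b})" and x: "x \<in> carrier G"
  then obtain a b where a: "a \<in> H" and b: "b \<in> carrier G" and c: "c = inv a \<otimes> inv b \<otimes> a \<otimes> b"
    by blast
  have "x \<otimes> c \<otimes> inv x =
      inv (inv a \<otimes> inv (inv x) \<otimes> a \<otimes> inv x) \<otimes> (inv a \<otimes> inv (b \<otimes> inv x) \<otimes> a \<otimes> (b \<otimes> inv x))"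
    using a H b x unfolding c
    by (auto simp: m_assoc inv_mult_group m_inv_cancel_left inv_m_cancel_left)
  also have "\<dots> \<in> comm_sub G H (carrier G)"
    using a b x by (intro K.m_closed K.m_inv_closed comm_sub_incl) auto
  finally show "x \<otimes> c \<otimes> inv x \<in> generate G (\<Union>a \<in> H. \<Union>b \<in> carrier G. {inv a \<otimes> inv b \<otimes> a \<otimes> b})"
    unfolding comm_sub_def .
qed

end

context finite_group
begin

lemma comm_sub_subset_char_kernel_iff:
  assumes \<chi>: "\<chi> \<in> Irr G" and H: "H \<subseteq> carrier G"
  shows "comm_sub G H (carrier G) \<subseteq> char_kernel G \<chi> \<longleftrightarrow> H \<subseteq> char_center G \<chi>"
proof -
  obtain n \<rho> where irr: "is_irrep G n \<rho>" and \<chi>_def: "\<chi> = character G \<rho>"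
    using \<chi> by (rule IrrE)
  have \<rho>: "is_rep G n \<rho>" using irr by (rule irrep_is_rep)
  show ?thesis
  proof
    assume ker: "comm_sub G H (carrier G) \<subseteq> char_kernel G \<chi>"
    show "H \<subseteq> char_center G \<chi>"
    proof
      fix a assume a: "a \<in> H"
      have "\<rho> a * \<rho> b = \<rho> b * \<rho> a" if b: "b \<in> carrier G" for b
        using comm_sub_incl[OF a b] ker H a b unfolding \<chi>_def char_kernel_character[OF \<rho>]
        by (intro rep_commute_if_commutator_trivial[OF \<rho>]) auto
      then obtain c where "\<rho> a = c \<cdot>\<^sub>m 1\<^sub>m n"
        using schur_lemma[OF irr rep_carrier[OF \<rho>]] H a by blast
      then show "a \<in> char_center G \<chi>" using H a unfolding \<chi>_def char_center_character[OF \<rho>] by auto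
    qed
  next
    assume "H \<subseteq> char_center G \<chi>"
    then have "comm_sub G H (carrier G) \<subseteq> {g \<in> carrier G. \<rho> g = 1\<^sub>m n}"
      unfolding \<chi>_def char_center_character[OF \<rho>]
      by (intro comm_sub_subset_subgroupI[OF rep_kernel_subgroup[OF \<rho>]])
        (auto intro: rep_commutator_trivial_if_scalar[OF \<rho>])
    then show "comm_sub G H (carrier G) \<subseteq> char_kernel G \<chi>"
      unfolding \<chi>_def char_kernel_character[OF \<rho>] .
  qed
qed

end

section \<open>The \<epsilon>-series\<close>

context group
begin

lemma V_rel_subset_carrier: "V_rel G N \<subseteq> carrier G"
  unfolding V_rel_def by (rule generate_incl) blast

lemma V_rel_mono: "N \<subseteq> N' \<Longrightarrow> V_rel G N \<subseteq> V_rel G N'"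
  unfolding V_rel_def Irr_rel_def by (rule mono_generate) blast

lemma nonvanishing_in_V_rel: "\<chi> \<in> Irr_rel G N \<Longrightarrow> g \<in> carrier G \<Longrightarrow> \<chi> g \<noteq> 0 \<Longrightarrow> g \<in> V_rel G N"
  unfolding V_rel_def by (rule generate.incl) blast

lemma eps_aux_subset_carrier: "eps_aux G k \<subseteq> carrier G"
  by (cases k) (simp_all add: V_rel_subset_carrier)

lemma eps_aux_Suc_subset: "eps_aux G (Suc k) \<subseteq> eps_aux G k"
proof (induction k)
  case 0
  show ?case by (simp add: V_rel_subset_carrier)
next
  case (Suc k)
  then show ?case by (simp only: eps_aux.simps) (intro V_rel_mono comm_sub_mono)
qed

lemma eps_aux_chain: "chain\<^sub>\<subseteq> (range (eps_aux G))"
proof -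
  have anti: "antimono (eps_aux G)" unfolding antimono_iff_le_Suc using eps_aux_Suc_subset by blast
  show ?thesis unfolding chain_subset_def
  proof (intro ballI)
    fix A B assume "A \<in> range (eps_aux G)" "B \<in> range (eps_aux G)"
    then obtain j k where "A = eps_aux G j" "B = eps_aux G k" by blast
    then show "A \<subseteq> B \<or> B \<subseteq> A" using antimonoD[OF anti] nat_le_linear[of j k] by blast
  qed
qed

lemma eps_inf_in_range: "eps_inf G \<in> range (eps_aux G)"
  unfolding eps_inf_def by simp

lemma eps_inf_subset_carrier: "eps_inf G \<subseteq> carrier G"
  unfolding eps_inf_def by (rule eps_aux_subset_carrier)

end

context finite_group
begin

lemma eps_aux_stabilizes: "\<exists>k. eps_aux G (Suc k) = eps_aux G k"
proof (rule ccontr)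
  assume no_fixpoint: "\<nexists>k. eps_aux G (Suc k) = eps_aux G k"
  have decrease: "card (eps_aux G (Suc k)) < card (eps_aux G k)" for k
  proof (rule psubset_card_mono)
    show "finite (eps_aux G k)" by (rule finite_subset[OF eps_aux_subset_carrier finite_carrier])
    show "eps_aux G (Suc k) \<subset> eps_aux G k" using eps_aux_Suc_subset[of k] no_fixpoint by blast
  qed
  have "card (eps_aux G k) + k \<le> card (carrier G)" for k
  proof (induction k)
    case (Suc k)
    then show ?case using decrease[of k] by simp
  qed simp
  from this[of "Suc (card (carrier G))"] show False by simp
qed

lemma eps_inf_fixed: "V_rel G (comm_sub G (eps_inf G) (carrier G)) = eps_inf G"
  unfolding eps_inf_def eps_aux.simps(2)[symmetric] by (rule LeastI_ex[OF eps_aux_stabilizes])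

lemma Irr_center_in_eps_series:
  assumes \<chi>: "\<chi> \<in> Irr G" and "comm_sub G (eps_aux G i) (carrier G) \<subseteq> char_kernel G \<chi>"
  shows "char_center G \<chi> \<in> range (eps_aux G) \<and> (\<forall>g \<in> carrier G - char_center G \<chi>. \<chi> g = 0)"
  using assms(2)
proof (induction i)
  case 0
  then have "char_center G \<chi> = eps_aux G 0"
    using comm_sub_subset_char_kernel_iff[OF \<chi>] by (auto simp: char_center_def)
  then show ?case using rangeI[of "eps_aux G" 0] by simp
next
  case (Suc i)
  show ?case
  proof (cases "comm_sub G (eps_aux G i) (carrier G) \<subseteq> char_kernel G \<chi>")
    case True
    then show ?thesis by (rule Suc.IH)
  next
    case False
    then have "\<chi> \<in> Irr_rel G (comm_sub G (eps_aux G i) (carrier G))"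
      using \<chi> by (simp add: Irr_rel_def)
    then have support: "g \<in> eps_aux G (Suc i)" if "g \<in> carrier G" "\<chi> g \<noteq> 0" for g
      using nonvanishing_in_V_rel that by simp
    have "eps_aux G (Suc i) \<subseteq> char_center G \<chi>"
      using Suc.prems comm_sub_subset_char_kernel_iff[OF \<chi> eps_aux_subset_carrier] by blast
    moreover have "char_center G \<chi> \<subseteq> eps_aux G (Suc i)"
      using support Irr_nonzero_on_center[OF \<chi>] by (auto simp: char_center_def)
    ultimately have "char_center G \<chi> = eps_aux G (Suc i)" by blast
    then show ?thesis using support by blast
  qed
qed

end

section \<open>Characters of quotient groups\<close>

context group
begin

lemma normal_coset_mult_one: "N \<lhd> G \<Longrightarrow> N #> \<one> = N"
  by (rule coset_mult_one[OF subgroup.subset[OF normal_imp_subgroup]])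

lemma is_irrep_lift_FactGroup:
  assumes N: "N \<lhd> G" and irr: "is_irrep (G Mod N) n \<rho>"
  shows "is_irrep G n (\<lambda>g. \<rho> (N #> g))"
proof -
  have \<rho>: "is_rep (G Mod N) n \<rho>" using irr by (rule irrep_is_rep)
  have coset: "N #> g \<in> carrier (G Mod N)" if "g \<in> carrier G" for g
    using that by (simp add: carrier_FactGroup)
  have rep: "is_rep G n (\<lambda>g. \<rho> (N #> g))"
    unfolding is_rep_def
  proof (intro conjI ballI)
    show "n > 0" using \<rho> unfolding is_rep_def by simp
    show "\<rho> (N #> \<one>) = 1\<^sub>m n" using \<rho> unfolding is_rep_def normal_coset_mult_one[OF N] by simp
  next
    fix g assume "g \<in> carrier G"
    then show "\<rho> (N #> g) \<in> carrier_mat n n" using \<rho> coset unfolding is_rep_def by simp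
  next
    fix x y assume x: "x \<in> carrier G" and y: "y \<in> carrier G"
    have "\<rho> (N #> (x \<otimes> y)) = \<rho> ((N #> x) <#> (N #> y))"
      using normal.rcos_sum[OF N x y] by simp
    also have "\<dots> = \<rho> (N #> x) * \<rho> (N #> y)"
      using \<rho> coset[OF x] coset[OF y] unfolding is_rep_def by simp
    finally show "\<rho> (N #> (x \<otimes> y)) = \<rho> (N #> x) * \<rho> (N #> y)" .
  qed
  show ?thesis
    unfolding is_irrep_def
  proof (intro conjI allI impI)
    fix W assume W: "is_subspace n W \<and> (\<forall>g \<in> carrier G. \<forall>w \<in> W. \<rho> (N #> g) *\<^sub>v w \<in> W)"
    then have "\<forall>C \<in> carrier (G Mod N). \<forall>w \<in> W. \<rho> C *\<^sub>v w \<in> W"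
      by (auto simp: carrier_FactGroup)
    then show "W = {0\<^sub>v n} \<or> W = carrier_vec n" using irr W unfolding is_irrep_def by blast
  qed (rule rep)
qed

lemma Irr_FactGroupE:
  assumes N: "N \<lhd> G" and \<chi>: "\<chi> \<in> Irr (G Mod N)"
  obtains \<psi> where "\<psi> \<in> Irr G" "N \<subseteq> char_kernel G \<psi>" "\<And>g. g \<in> carrier G \<Longrightarrow> \<chi> (N #> g) = \<psi> g"
proof -
  obtain n \<rho> where irr: "is_irrep (G Mod N) n \<rho>" and \<chi>_def: "\<chi> = character (G Mod N) \<rho>"
    using \<chi> by (rule IrrE)
  define \<psi> where "\<psi> = character G (\<lambda>g. \<rho> (N #> g))"
  have \<psi>: "\<psi> \<in> Irr G" unfolding \<psi>_def by (rule IrrI[OF is_irrep_lift_FactGroup[OF N irr]])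
  have lift: "\<chi> (N #> g) = \<psi> g" if "g \<in> carrier G" for g
    using that by (simp add: \<chi>_def \<psi>_def character_def carrier_FactGroup)
  have kernel: "N \<subseteq> char_kernel G \<psi>"
  proof
    fix x assume x: "x \<in> N"
    have N_subgroup: "subgroup N G" using N by (rule normal_imp_subgroup)
    have x_carrier: "x \<in> carrier G" using subgroup.mem_carrier[OF N_subgroup x] .
    have "N #> x = N #> \<one>"
      using coset_join2[OF x_carrier N_subgroup x] normal_coset_mult_one[OF N] by simp
    then have "\<psi> x = \<psi> \<one>" using lift[OF x_carrier] lift[OF one_closed] by simp
    then show "x \<in> char_kernel G \<psi>" using x_carrier by (simp add: char_kernel_def)
  qed
  show ?thesis by (rule that[OF \<psi> kernel lift])
qed

lemma char_center_FactGroup: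
  assumes N: "N \<lhd> G" and lift: "\<And>g. g \<in> carrier G \<Longrightarrow> \<chi> (N #> g) = \<psi> g"
  shows "char_center (G Mod N) \<chi> = (\<lambda>g. N #> g) ` char_center G \<psi>"
proof (intro equalityI subsetI)
  have one: "\<chi> N = \<psi> \<one>" using lift[OF one_closed] normal_coset_mult_one[OF N] by simp
  fix C assume "C \<in> char_center (G Mod N) \<chi>"
  then obtain g where g: "g \<in> carrier G" "C = N #> g" and "cmod (\<chi> C) = cmod (\<chi> N)"
    by (auto simp: char_center_def carrier_FactGroup)
  then have "g \<in> char_center G \<psi>" using one lift[OF g(1)] by (simp add: char_center_def)
  then show "C \<in> (\<lambda>g. N #> g) ` char_center G \<psi>" using g(2) by (rule rev_image_eqI)
next
  have one: "\<chi> N = \<psi> \<one>" using lift[OF one_closed] normal_coset_mult_one[OF N] by simp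
  fix C assume "C \<in> (\<lambda>g. N #> g) ` char_center G \<psi>"
  then obtain g where g: "g \<in> char_center G \<psi>" "C = N #> g" by blast
  then have "g \<in> carrier G" by (simp add: char_center_def)
  then show "C \<in> char_center (G Mod N) \<chi>"
    using g one lift by (auto simp: char_center_def carrier_FactGroup)
qed

lemma FactGroup_vanishes_off_center:
  assumes N: "N \<lhd> G" and lift: "\<And>g. g \<in> carrier G \<Longrightarrow> \<chi> (N #> g) = \<psi> g"
    and vanish: "\<forall>g \<in> carrier G - char_center G \<psi>. \<psi> g = 0"
  shows "\<forall>C \<in> carrier (G Mod N) - char_center (G Mod N) \<chi>. \<chi> C = 0"
proof
  fix C assume C: "C \<in> carrier (G Mod N) - char_center (G Mod N) \<chi>"
  then obtain g where g: "g \<in> carrier G" and C_def: "C = N #> g" by (auto simp: carrier_FactGroup)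
  have "C \<notin> (\<lambda>g. N #> g) ` char_center G \<psi>"
    using C char_center_FactGroup[where \<chi> = \<chi> and \<psi> = \<psi>, OF N lift] by simp
  then have "g \<notin> char_center G \<psi>" unfolding C_def by blast
  then show "\<chi> C = 0" using vanish g lift[OF g] C_def by simp
qed

end

section \<open>Nested GVZ-groups\<close>

lemma chain_subset_image:
  assumes "chain\<^sub>\<subseteq> \<C>"
  shows "chain\<^sub>\<subseteq> ((`) f ` \<C>)"
  unfolding chain_subset_def
proof (intro ballI)
  fix A' B' assume "A' \<in> (`) f ` \<C>" "B' \<in> (`) f ` \<C>"
  then obtain A B where "A \<in> \<C>" "B \<in> \<C>" "A' = f ` A" "B' = f ` B" by blast
  then show "A' \<subseteq> B' \<or> B' \<subseteq> A'" using assms unfolding chain_subset_def by (meson image_mono)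
qed

lemma nested_groupI:
  assumes "\<And>\<chi>. \<chi> \<in> Irr G \<Longrightarrow> char_center G \<chi> \<in> \<C>" and "chain\<^sub>\<subseteq> \<C>"
  shows "nested_group G"
  using assms unfolding nested_group_def chain_subset_def by blast

context finite_group
begin

lemma FactGroup_comm_sub_eps_aux_nested_GVZ:
  fixes i :: nat
  defines "N \<equiv> comm_sub G (eps_aux G i) (carrier G)"
  shows "nested_group (G Mod N) \<and> GVZ_group (G Mod N)"
proof -
  have N: "N \<lhd> G" unfolding N_def by (rule comm_sub_normal[OF eps_aux_subset_carrier])
  have chars: "char_center (G Mod N) \<chi> \<in> (`) (\<lambda>g. N #> g) ` range (eps_aux G) \<and>
      (\<forall>C \<in> carrier (G Mod N) - char_center (G Mod N) \<chi>. \<chi> C = 0)"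
    if \<chi>: "\<chi> \<in> Irr (G Mod N)" for \<chi>
  proof -
    obtain \<psi> where \<psi>: "\<psi> \<in> Irr G" "N \<subseteq> char_kernel G \<psi>"
      and lift: "\<And>g. g \<in> carrier G \<Longrightarrow> \<chi> (N #> g) = \<psi> g"
      using Irr_FactGroupE[OF N \<chi>] by blast
    obtain j where center: "char_center G \<psi> = eps_aux G j"
      and vanish: "\<forall>g \<in> carrier G - char_center G \<psi>. \<psi> g = 0"
      using Irr_center_in_eps_series[OF \<psi>(1) \<psi>(2)[unfolded N_def]] by blast
    have "char_center (G Mod N) \<chi> = (\<lambda>g. N #> g) ` eps_aux G j"
      using char_center_FactGroup[where \<chi> = \<chi> and \<psi> = \<psi>, OF N lift] center by simp
    moreover have "(\<lambda>g. N #> g) ` eps_aux G j \<in> (`) (\<lambda>g. N #> g) ` range (eps_aux G)"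
      by (intro imageI rangeI)
    ultimately show ?thesis
      using FactGroup_vanishes_off_center[where \<chi> = \<chi> and \<psi> = \<psi>, OF N lift vanish] by simp
  qed
  have "nested_group (G Mod N)"
    by (rule nested_groupI[OF _ chain_subset_image[OF eps_aux_chain, of "\<lambda>g. N #> g"]])
      (use chars in blast)
  moreover have "GVZ_group (G Mod N)" unfolding GVZ_group_def using chars by blast
  ultimately show ?thesis ..
qed

lemma nested_GVZ_if_eps_inf_trivial:
  assumes "eps_inf G = {\<one>}"
  shows "nested_group G \<and> GVZ_group G"
proof -
  obtain k where "eps_inf G = eps_aux G k" using eps_inf_in_range by blast
  then have triv: "comm_sub G (eps_aux G k) (carrier G) = {\<one>}" using assms comm_sub_one by simp
  have chars: "char_center G \<chi> \<in> range (eps_aux G) \<and> (\<forall>g \<in> carrier G - char_center G \<chi>. \<chi> g = 0)"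
    if "\<chi> \<in> Irr G" for \<chi>
    by (rule Irr_center_in_eps_series[OF that, of k]) (simp add: triv char_kernel_def)
  have "nested_group G" by (rule nested_groupI[OF _ eps_aux_chain]) (use chars in blast)
  moreover have "GVZ_group G" unfolding GVZ_group_def using chars by blast
  ultimately show ?thesis ..
qed

lemma nested_group_max_center:
  assumes nested: "nested_group G" and S: "S \<subseteq> Irr G" "S \<noteq> {}"
  obtains \<chi>\<^sub>0 where "\<chi>\<^sub>0 \<in> S" "\<And>\<chi>. \<chi> \<in> S \<Longrightarrow> char_center G \<chi> \<subseteq> char_center G \<chi>\<^sub>0"
proof -
  have "char_center G ` S \<subseteq> Pow (carrier G)" by (auto simp: char_center_def)
  then have "finite (char_center G ` S)" by (rule finite_subset) (simp add: finite_carrier)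
  then obtain Z where "Z \<in> char_center G ` S"
    and Z_max: "\<forall>Z' \<in> char_center G ` S. Z \<subseteq> Z' \<longrightarrow> Z = Z'"
    using finite_has_maximal[of "char_center G ` S"] S(2) by blast
  then obtain \<chi>\<^sub>0 where \<chi>\<^sub>0: "\<chi>\<^sub>0 \<in> S" and Z: "Z = char_center G \<chi>\<^sub>0" by blast
  have "char_center G \<chi> \<subseteq> char_center G \<chi>\<^sub>0" if \<chi>: "\<chi> \<in> S" for \<chi>
  proof -
    have "char_center G \<chi> \<subseteq> char_center G \<chi>\<^sub>0 \<or> char_center G \<chi>\<^sub>0 \<subseteq> char_center G \<chi>"
      using nested S(1) \<chi> \<chi>\<^sub>0 unfolding nested_group_def by blast
    then show ?thesis using Z_max \<chi> Z by blast
  qed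
  with \<chi>\<^sub>0 show ?thesis by (rule that)
qed

lemma eps_inf_trivial_if_nested_GVZ:
  assumes nested: "nested_group G" and GVZ: "GVZ_group G"
  shows "eps_inf G = {\<one>}"
proof (rule ccontr)
  let ?M = "comm_sub G (eps_inf G) (carrier G)"
  assume nontrivial: "eps_inf G \<noteq> {\<one>}"
  have Irr_rel: "Irr_rel G ?M \<subseteq> Irr G" by (auto simp: Irr_rel_def)
  have "Irr_rel G ?M \<noteq> {}"
  proof
    assume "Irr_rel G ?M = {}"
    then have "V_rel G ?M = {\<one>}" unfolding V_rel_def by (simp add: generate_empty)
    with eps_inf_fixed nontrivial show False by simp
  qed
  then obtain \<chi>\<^sub>0 where \<chi>\<^sub>0: "\<chi>\<^sub>0 \<in> Irr_rel G ?M"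
    and max: "\<And>\<chi>. \<chi> \<in> Irr_rel G ?M \<Longrightarrow> char_center G \<chi> \<subseteq> char_center G \<chi>\<^sub>0"
    using nested_group_max_center[OF nested Irr_rel] by blast
  have Irr: "\<chi>\<^sub>0 \<in> Irr G" using \<chi>\<^sub>0 Irr_rel by blast
  have "V_rel G ?M \<subseteq> char_center G \<chi>\<^sub>0"
    unfolding V_rel_def
  proof (rule generate_subgroup_incl[OF _ char_center_subgroup[OF Irr]], rule subsetI)
    fix g assume "g \<in> {g \<in> carrier G. \<exists>\<chi> \<in> Irr_rel G ?M. \<chi> g \<noteq> 0}"
    then obtain \<chi> where g: "g \<in> carrier G" and \<chi>: "\<chi> \<in> Irr_rel G ?M" "\<chi> g \<noteq> 0" by blast
    have "g \<in> char_center G \<chi>" using GVZ Irr_rel \<chi> g unfolding GVZ_group_def by blast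
    then show "g \<in> char_center G \<chi>\<^sub>0" using max[OF \<chi>(1)] by blast
  qed
  then have "?M \<subseteq> char_kernel G \<chi>\<^sub>0"
    using eps_inf_fixed comm_sub_subset_char_kernel_iff[OF Irr eps_inf_subset_carrier] by simp
  then show False using \<chi>\<^sub>0 by (simp add: Irr_rel_def)
qed

end

theorem theoremJ:
  fixes G :: "('g, 'b) monoid_scheme"
  assumes "group G" and "finite (carrier G)"
  shows "(\<forall>i::nat. i \<ge> 1 \<longrightarrow>
            nested_group (G Mod (comm_sub G (eps G i) (carrier G))) \<and>
            GVZ_group (G Mod (comm_sub G (eps G i) (carrier G))))
       \<and> ((nested_group G \<and> GVZ_group G) \<longleftrightarrow> eps_inf G = {\<one>\<^bsub>G\<^esub>})"
proof -
  interpret finite_group G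
    by (rule finite_group.intro[OF assms(1) finite_group_axioms.intro[OF assms(2)]])
  have quotients: "nested_group (G Mod (comm_sub G (eps G i) (carrier G))) \<and>
      GVZ_group (G Mod (comm_sub G (eps G i) (carrier G)))" for i
    unfolding eps_def by (rule FactGroup_comm_sub_eps_aux_nested_GVZ)
  have "nested_group G \<and> GVZ_group G \<longleftrightarrow> eps_inf G = {\<one>\<^bsub>G\<^esub>}"
    using nested_GVZ_if_eps_inf_trivial eps_inf_trivial_if_nested_GVZ by blast
  with quotients show ?thesis by blast
qed

end
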